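(* Let $F:\{0,1\}^n\to\mathbb{F}^E_m\cap[0,1]$ be a finite-precision CDF over a binary number format $\mathcal{B}=(n,\gamma_{\mathcal{B}},\phi_{\mathcal{B}})$. Then the procedure $\textsc{Opt}(F)$ described in the context halts almost surely, returns a string $X\in\{0,1\}^n$ with $\Pr(X\le_{\mathcal{B}}x)=F(x)$ for every $x\in\{0,1\}^n$, and is entropy-optimal: its expected number of fair random bits drawn equals the minimum expected entropy cost over all random variate generators with the same output distribution.
   Context: $\overline{\mathbb{R}}=\mathbb{R}\cup\{-\infty,+\infty,\bot\}$ is totally ordered by $-\infty<$ reals $<+\infty<\bot$. A binary number format $\mathcal{B}=(n,\gamma_{\mathcal{B}},\phi_{\mathcal{B}})$ consists of $n\ge1$, $\gamma_{\mathcal{B}}:\{0,1\}^n\to\overline{\mathbb{R}}$, and a bijection $\phi_{\mathcal{B}}$ of $\{0,1\}^n$ with $b<_{\mathrm{dict}}b'\Rightarrow\gamma_{\mathcal{B}}(\phi_{\mathcal{B}}(b))\le\gamma_{\mathcal{B}}(\phi_{\mathcal{B}}(b'))$; it induces the order $b<_{\mathcal{B}}b'$ iff $\phi_{\mathcal{B}}^{-1}(b)<_{\mathrm{dict}}\phi_{\mathcal{B}}^{-1}(b')$. $\mathbb{F}^E_m\cap[0,1]$ is the set of reals in $[0,1]$ representable as floating-point numbers with $E$ exponent and $m$ mantissa bits. A finite-precision CDF over $\mathcal{B}$ is $F:\{0,1\}^n\to\mathbb{F}^E_m\cap[0,1]$ with $F(\phi_{\mathcal{B}}(1^n))=1$ and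 $b<_{\mathcal{B}}b'\Rightarrow F(b)\le F(b')$. For $z\in[0,1]$ with concise binary expansion $(z_0.z_1z_2\ldots)_2$ (not ending in infinitely many 1s) write $[z]_j=z_j$. $\textsc{Opt}(F,b,\ell,f_0,f_1)$, called initially as $\textsc{Opt}(F,\varepsilon,0,0,1)$: if $|b|=n$ return $\phi_{\mathcal{B}}(b)$. Let $f_2=F(\phi_{\mathcal{B}}(b\,0\,1^{n-|b|-1}))$. If $f_2=f_1$ return $\textsc{Opt}(F,b0,\ell,f_0,f_2)$; if $f_2=f_0$ return $\textsc{Opt}(F,b1,\ell,f_2,f_1)$. Let $a_0(j)=[f_2-f_0]_j$ and $a_1(j)=[f_1-f_2]_j$ (exact real differences). If $\ell>0$: if $a_0(\ell)=1$ and $a_1(\ell)=0$ return $\textsc{Opt}(F,b0,\ell,f_0,f_2)$; if $a_0(\ell)=0$ and $a_1(\ell)=1$ return $\textsc{Opt}(F,b1,\ell,f_2,f_1)$. Then repeat: draw a fair random bit $x$, set $\ell\leftarrow\ell+1$; if $x=0$ and $a_0(\ell)=1$ return $\textsc{Opt}(F,b0,\ell,f_0,f_2)$; if $x=1$ and $a_1(\ell)=1$ return $\textsc{Opt}(F,b1,\ell,f_2,f_1)$. A random variate generator for a distribution $q$ on $\{0,1\}^n$ is a partial map $Y:\{0,1\}^*\rightharpoonup\{0,1\}^n$ with prefix-free domain, $\sum_{u\in\mathrm{dom}(Y)}2^{-|u|}=1$ and $\sum_{u}2^{-|u|}\mathbf{1}[Y(u)=s]=q(s)$; its expected entropy cost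 is $\sum_{u\in\mathrm{dom}(Y)}|u|2^{-|u|}$. *)

theory Defs
  imports "HOL-Analysis.Analysis" "HOL-Library.Sublist"
begin

datatype xreal = MInf | Fin real | PInf | Bot

fun xrank :: "xreal \<Rightarrow> nat" where
  "xrank MInf = 0" | "xrank (Fin _) = 1" | "xrank PInf = 2" | "xrank Bot = 3"

definition xle :: "xreal \<Rightarrow> xreal \<Rightarrow> bool" where
  "xle a b = (case (a, b) of (Fin x, Fin y) \<Rightarrow> x \<le> y | _ \<Rightarrow> xrank a \<le> xrank b)"

text \<open>Bit strings are bool lists (False = 0, True = 1); the strings of length n.\<close>
definition strs :: "nat \<Rightarrow> bool list set" where
  "strs n = {b. length b = n}"

abbreviation dict_less :: "bool list \<Rightarrow> bool list \<Rightarrow> bool" where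
  "dict_less b b' \<equiv> ord_class.lexordp b b'"

definition binary_number_format ::
  "nat \<Rightarrow> (bool list \<Rightarrow> xreal) \<Rightarrow> (bool list \<Rightarrow> bool list) \<Rightarrow> bool" where
  "binary_number_format n \<gamma> \<phi> \<longleftrightarrow> n \<ge> 1 \<and> bij_betw \<phi> (strs n) (strs n) \<and>
     (\<forall>b\<in>strs n. \<forall>b'\<in>strs n. dict_less b b' \<longrightarrow> xle (\<gamma> (\<phi> b)) (\<gamma> (\<phi> b')))"

definition B_less :: "nat \<Rightarrow> (bool list \<Rightarrow> bool list) \<Rightarrow> bool list \<Rightarrow> bool list \<Rightarrow> bool" where
  "B_less n \<phi> b b' \<longleftrightarrow> dict_less (inv_into (strs n) \<phi> b) (inv_into (strs n) \<phi> b')"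

definition B_le :: "nat \<Rightarrow> (bool list \<Rightarrow> bool list) \<Rightarrow> bool list \<Rightarrow> bool list \<Rightarrow> bool" where
  "B_le n \<phi> b b' \<longleftrightarrow> b = b' \<or> B_less n \<phi> b b'"

text \<open>IEEE-754 style: bias 2^(E-1)-1; zero, subnormals k/2^m * 2^(1-bias) and normals
  (1 + k/2^m) * 2^(e-bias) for 1 <= e <= 2^E - 2, k < 2^m, with either sign
  (the all-ones exponent is reserved for infinities/NaN).\<close>
definition float_set :: "nat \<Rightarrow> nat \<Rightarrow> real set" where
  "float_set E m =
     (let bias = (2::int) ^ (E - 1) - 1 in
       {s * (real k / 2 ^ m) * 2 powr (real_of_int (1 - bias)) | s k. s \<in> {-1, 1} \<and> k < 2 ^ m} \<union>
       {s * (1 + real k / 2 ^ m) * 2 powr (real_of_int (int e - bias)) | s k e.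
          s \<in> {-1, 1} \<and> k < 2 ^ m \<and> 1 \<le> e \<and> e \<le> 2 ^ E - 2})"

definition fp_cdf ::
  "nat \<Rightarrow> nat \<Rightarrow> nat \<Rightarrow> (bool list \<Rightarrow> bool list) \<Rightarrow> (bool list \<Rightarrow> real) \<Rightarrow> bool" where
  "fp_cdf E m n \<phi> F \<longleftrightarrow>
     (\<forall>b\<in>strs n. F b \<in> float_set E m \<inter> {0..1}) \<and>
     F (\<phi> (replicate n True)) = 1 \<and>
     (\<forall>b\<in>strs n. \<forall>b'\<in>strs n. B_less n \<phi> b b' \<longrightarrow> F b \<le> F b')"

text \<open>[z]_j for z in [0,1] (concise expansion, not ending in infinitely many 1s).\<close>
definition bdig :: "real \<Rightarrow> nat \<Rightarrow> bool" where
  "bdig z j \<longleftrightarrow> \<lfloor>z * 2 ^ j\<rfloor> mod 2 = 1"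

text \<open>The repeat loop: given a0 = f2 - f0, a1 = f1 - f2, current l and the remaining
  input bits, returns the chosen branch (False = b0, True = b1), the new l and the
  unread bits; None if the input bits run out first.\<close>
partial_function (option) opt_loop ::
  "real \<Rightarrow> real \<Rightarrow> nat \<Rightarrow> bool list \<Rightarrow> (bool \<times> nat \<times> bool list) option" where
  "opt_loop a0 a1 l u =
    (if u = [] then None
     else if \<not> hd u \<and> bdig a0 (l + 1) then Some (False, l + 1, tl u)
     else if hd u \<and> bdig a1 (l + 1) then Some (True, l + 1, tl u)
     else opt_loop a0 a1 (l + 1) (tl u))"

definition split_val ::
  "nat \<Rightarrow> (bool list \<Rightarrow> bool list) \<Rightarrow> (bool list \<Rightarrow> real) \<Rightarrow> bool list \<Rightarrow> real" where
  "split_val n \<phi> F b = F (\<phi> (b @ [False] @ replicate (n - length b - 1) True))"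

text \<open>opt n phi F b l f0 f1 u: runs Opt(F,b,l,f0,f1) reading random bits from u.
  Returns Some (output, unread bits) if it halts before running out of bits.\<close>
declare [[unify_search_bound = 400]]
partial_function (option) opt ::
  "nat \<Rightarrow> (bool list \<Rightarrow> bool list) \<Rightarrow> (bool list \<Rightarrow> real) \<Rightarrow> bool list \<Rightarrow> nat \<Rightarrow> real \<Rightarrow> real
   \<Rightarrow> bool list \<Rightarrow> (bool list \<times> bool list) option" where
  "opt n \<phi> F b l f0 f1 u =
    (if length b = n then Some (\<phi> b, u)
     else if split_val n \<phi> F b = f1 then opt n \<phi> F (b @ [False]) l f0 (split_val n \<phi> F b) u
     else if split_val n \<phi> F b = f0 then opt n \<phi> F (b @ [True]) l (split_val n \<phi> F b) f1 u
     else if l > 0 \<and> bdig (split_val n \<phi> F b - f0) l \<and> \<not> bdig (f1 - split_val n \<phi> F b) l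
       then opt n \<phi> F (b @ [False]) l f0 (split_val n \<phi> F b) u
     else if l > 0 \<and> \<not> bdig (split_val n \<phi> F b - f0) l \<and> bdig (f1 - split_val n \<phi> F b) l
       then opt n \<phi> F (b @ [True]) l (split_val n \<phi> F b) f1 u
     else
       Option.bind (opt_loop (split_val n \<phi> F b - f0) (f1 - split_val n \<phi> F b) l u)
         (\<lambda>r. if fst r then opt n \<phi> F (b @ [True]) (fst (snd r)) (split_val n \<phi> F b) f1 (snd (snd r))
              else opt n \<phi> F (b @ [False]) (fst (snd r)) f0 (split_val n \<phi> F b) (snd (snd r))))"

declare [[unify_search_bound = 60]]

text \<open>The random variate generator realised by Opt(F) = Opt(F, eps, 0, 0, 1):
  it maps an input bit string u to the output iff Opt halts after reading exactly u.\<close>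
definition opt_gen ::
  "nat \<Rightarrow> (bool list \<Rightarrow> bool list) \<Rightarrow> (bool list \<Rightarrow> real) \<Rightarrow> bool list \<Rightarrow> bool list option" where
  "opt_gen n \<phi> F u = (case opt n \<phi> F [] 0 0 1 u of Some (x, []) \<Rightarrow> Some x | _ \<Rightarrow> None)"

definition gen_dist :: "(bool list \<Rightarrow> bool list option) \<Rightarrow> bool list \<Rightarrow> ennreal" where
  "gen_dist Y s = (\<Sum>\<^sub>\<infinity> u \<in> {u. Y u = Some s}. ennreal ((1/2) ^ length u))"

definition is_generator :: "nat \<Rightarrow> (bool list \<Rightarrow> bool list option) \<Rightarrow> (bool list \<Rightarrow> ennreal) \<Rightarrow> bool" where
  "is_generator n Y q \<longleftrightarrow>
     (\<forall>u\<in>dom Y. \<forall>v\<in>dom Y. prefix u v \<longrightarrow> u = v) \<and>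
     ran Y \<subseteq> strs n \<and>
     (\<Sum>\<^sub>\<infinity> u \<in> dom Y. ennreal ((1/2) ^ length u)) = 1 \<and>
     (\<forall>s. gen_dist Y s = q s)"

definition entropy_cost :: "(bool list \<Rightarrow> bool list option) \<Rightarrow> ennreal" where
  "entropy_cost Y = (\<Sum>\<^sub>\<infinity> u \<in> dom Y. ennreal (real (length u) * (1/2) ^ length u))"

end

theory Submission
  imports Defs
begin

text \<open>The codes \<open>c\<close> (preimages of outputs under \<open>\<phi>\<close>, in dictionary order) are the leaves of
  a binary tree; a node \<open>b\<close> carries the probability mass of the outputs below it, and the masses of
  its two children add up to its own. Opt descends this tree while reading the binary expansions of
  the two child masses in parallel. Counting the inputs of length \<open>k\<close> that end in a given output,
  the carries of the binary addition of the child masses are exactly absorbed by the inner loop, so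
  there is one such input if the \<open>k\<close>-th binary digit of the output probability is \<open>1\<close> and none
  otherwise. Hence Opt realises the Knuth--Yao sampler: its output law is given by \<open>F\<close>, and
  its cost \<open>\<Sum>s k. k * digit\<^sub>k(p s) / 2^k\<close> is minimal because every other generator has, for
  each output, at least as much probability in every tail of path lengths.\<close>

lemma bdig_Suc:
  "of_bool (bdig t (Suc m)) = \<lfloor>(t::real) * 2 ^ Suc m\<rfloor> - 2 * \<lfloor>t * 2 ^ m\<rfloor>"
proof -
  define q where "q = \<lfloor>t * 2 ^ m\<rfloor>"
  have "q \<le> t * 2 ^ m" "t * 2 ^ m < q + 1"
    unfolding q_def by linarith+
  moreover have "t * 2 ^ Suc m = 2 * (t * 2 ^ m)"
    by simp
  ultimately consider "\<lfloor>t * 2 ^ Suc m\<rfloor> = 2 * q" | "\<lfloor>t * 2 ^ Suc m\<rfloor> = 2 * q + 1"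
    by linarith
  then show ?thesis
    unfolding q_def[symmetric] bdig_def by cases simp_all
qed

lemma not_bdig_0 [simp]: "\<not> bdig 0 k"
  unfolding bdig_def by simp

lemma bdig_1_iff: "bdig 1 k \<longleftrightarrow> k = 0"
proof (cases k)
  case (Suc j)
  have "\<lfloor>(1::real) * 2 ^ k\<rfloor> = 2 * 2 ^ j"
    using Suc by (metis floor_of_int mult_1 of_int_numeral of_int_power power_Suc)
  then show ?thesis
    unfolding bdig_def using Suc by simp
qed (simp add: bdig_def)

lemma sum_bdig_lessThan:
  assumes "0 \<le> p" "p < 2"
  shows "(\<Sum>j<Suc k. of_bool (bdig p j) * (1/2::real) ^ j) = \<lfloor>p * 2 ^ k\<rfloor> / 2 ^ k"
proof (induction k)
  case 0
  have "\<lfloor>p\<rfloor> = 0 \<or> \<lfloor>p\<rfloor> = 1"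
    using assms by linarith
  then show ?case
    unfolding bdig_def by auto
next
  case (Suc k)
  have "(of_bool (bdig p (Suc k)) :: real) = \<lfloor>p * 2 ^ Suc k\<rfloor> - 2 * \<lfloor>p * 2 ^ k\<rfloor>"
    by (metis bdig_Suc of_int_of_bool of_int_diff of_int_mult of_int_numeral)
  then show ?case
    unfolding sum.lessThan_Suc[of _ "Suc k"] Suc.IH by (simp add: field_simps power_divide)
qed

lemma floor_scaled_LIMSEQ: "(\<lambda>k. \<lfloor>p * 2 ^ k\<rfloor> / (2::real) ^ k) \<longlonglongrightarrow> p"
proof (rule tendsto_sandwich[of "\<lambda>k. p - (1/2) ^ k" _ sequentially "\<lambda>k. p"])
  show "\<forall>\<^sub>F k in sequentially. p - (1/2) ^ k \<le> \<lfloor>p * 2 ^ k\<rfloor> / (2::real) ^ k"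
  proof (intro always_eventually allI)
    fix k :: nat
    have "p * 2 ^ k - 1 \<le> \<lfloor>p * 2 ^ k\<rfloor>"
      by linarith
    then have "(p * 2 ^ k - 1) / 2 ^ k \<le> \<lfloor>p * 2 ^ k\<rfloor> / (2::real) ^ k"
      by (intro divide_right_mono) auto
    then show "p - (1/2) ^ k \<le> \<lfloor>p * 2 ^ k\<rfloor> / (2::real) ^ k"
      by (simp add: field_simps power_divide)
  qed
  show "\<forall>\<^sub>F k in sequentially. \<lfloor>p * 2 ^ k\<rfloor> / (2::real) ^ k \<le> p"
  proof (intro always_eventually allI)
    fix k :: nat
    have "\<lfloor>p * 2 ^ k\<rfloor> \<le> p * 2 ^ k"
      by linarith
    then show "\<lfloor>p * 2 ^ k\<rfloor> / (2::real) ^ k \<le> p"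
      by (simp add: field_simps)
  qed
  show "(\<lambda>k. p - (1/2::real) ^ k) \<longlonglongrightarrow> p"
    using tendsto_diff[OF tendsto_const LIMSEQ_realpow_zero[of "1/2::real"]] by simp
qed simp

lemma bdig_sums:
  assumes "0 \<le> p" "p < 2"
  shows "(\<lambda>j. of_bool (bdig p j) * (1/2::real) ^ j) sums p"
  unfolding sums_def
  by (rule LIMSEQ_imp_Suc) (simp only: sum_bdig_lessThan[OF assms] floor_scaled_LIMSEQ)

lemma bdig_suminf_ennreal:
  assumes "0 \<le> p" "p < 2"
  shows "(\<Sum>j. of_bool (bdig p j) * ennreal ((1/2) ^ j)) = ennreal p"
proof -
  have "(\<Sum>j. of_bool (bdig p j) * ennreal ((1/2) ^ j)) = (\<Sum>j. ennreal (of_bool (bdig p j) * (1/2) ^ j))"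
    by (intro suminf_cong) (simp add: ennreal_mult')
  also have "\<dots> = ennreal p"
    using bdig_sums[OF assms] by (simp add: suminf_ennreal2 sums_iff sums_unique)
  finally show ?thesis .
qed

lemma suminf_commute_ennreal:
  fixes f :: "nat \<Rightarrow> nat \<Rightarrow> ennreal"
  shows "(\<Sum>i. \<Sum>j. f i j) = (\<Sum>j. \<Sum>i. f i j)"
proof -
  have "(\<Sum>i. \<Sum>j. f i j) = (\<integral>\<^sup>+i. (\<Sum>j. f i j) \<partial>count_space UNIV)"
    by (rule nn_integral_count_space_nat[symmetric])
  also have "\<dots> = (\<Sum>j. \<integral>\<^sup>+i. f i j \<partial>count_space UNIV)"
    by (rule nn_integral_suminf) simp
  also have "\<dots> = (\<Sum>j. \<Sum>i. f i j)"
    by (simp add: nn_integral_count_space_nat)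
  finally show ?thesis .
qed

lemma suminf_split_tail_ennreal:
  fixes w :: "nat \<Rightarrow> ennreal"
  shows "(\<Sum>j. w j) = (\<Sum>j<Suc k. w j) + (\<Sum>j. if k < j then w j else 0)"
proof -
  have "(\<Sum>j. w j) = (\<Sum>j. (if j < Suc k then w j else 0) + (if k < j then w j else 0))"
    by (rule suminf_cong) auto
  also have "\<dots> = (\<Sum>j. if j < Suc k then w j else 0) + (\<Sum>j. if k < j then w j else 0)"
    by (rule suminf_add[symmetric]) auto
  also have "(\<Sum>j. if j < Suc k then w j else 0) = (\<Sum>j<Suc k. w j)"
    by (subst suminf_finite[of "{..<Suc k}"]) auto
  finally show ?thesis .
qed

lemma suminf_mult_index_eq_sum_tails:
  fixes w :: "nat \<Rightarrow> ennreal"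
  shows "(\<Sum>j. of_nat j * w j) = (\<Sum>k. \<Sum>j. if k < j then w j else 0)"
proof -
  have "(\<Sum>k. if k < j then w j else 0) = of_nat j * w j" for j
    by (subst suminf_finite[of "{..<j}"]) auto
  then have "(\<Sum>j. of_nat j * w j) = (\<Sum>j. \<Sum>k. if k < j then w j else 0)"
    by simp
  also have "\<dots> = (\<Sum>k. \<Sum>j. if k < j then w j else 0)"
    by (rule suminf_commute_ennreal)
  finally show ?thesis .
qed

lemma sum_dyadic_scaled:
  fixes c :: "nat \<Rightarrow> nat"
  shows "(\<Sum>j<Suc k. real (c j) * (1/2) ^ j) * 2 ^ k = real (\<Sum>j<Suc k. c j * 2 ^ (k - j))"
proof -
  have "(\<Sum>j<Suc k. real (c j) * (1/2) ^ j) * 2 ^ k = (\<Sum>j<Suc k. real (c j) * ((1/2) ^ j * 2 ^ k))"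
    by (simp only: sum_distrib_right mult.assoc)
  also have "\<dots> = (\<Sum>j<Suc k. real (c j) * 2 ^ (k - j))"
    by (intro sum.cong) (simp_all add: power_divide power_diff)
  finally show ?thesis
    by simp
qed

text \<open>The truncation \<open>\<Sum>j\<le>k. c j / 2^j\<close> is a multiple of \<open>2^-k\<close> not exceeding \<open>p\<close>,
  hence not exceeding the truncated binary expansion of \<open>p\<close>.\<close>
lemma bdig_tail_le:
  fixes c :: "nat \<Rightarrow> nat"
  assumes p: "0 \<le> p" "p < 2"
    and c: "(\<Sum>j. of_nat (c j) * ennreal ((1/2) ^ j)) = ennreal p"
  shows "(\<Sum>j. if k < j then of_bool (bdig p j) * ennreal ((1/2) ^ j) else 0)
         \<le> (\<Sum>j. if k < j then of_nat (c j) * ennreal ((1/2) ^ j) else 0)"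
    (is "?tail_d \<le> ?tail_c")
proof -
  define Pc where "Pc = (\<Sum>j<Suc k. real (c j) * (1/2) ^ j)"
  define Pd where "Pd = (\<Sum>j<Suc k. of_bool (bdig p j) * (1/2::real) ^ j)"
  have "(\<Sum>j<Suc k. of_nat (c j) * ennreal ((1/2) ^ j)) = ennreal Pc"
    unfolding Pc_def
    by (subst sum_ennreal[symmetric]) (auto simp: ennreal_mult' ennreal_of_nat_eq_real_of_nat)
  then have split_c: "ennreal p = ennreal Pc + ?tail_c"
    using suminf_split_tail_ennreal[of "\<lambda>j. of_nat (c j) * ennreal ((1/2) ^ j)" k] c by simp
  have "(\<Sum>j<Suc k. of_bool (bdig p j) * ennreal ((1/2) ^ j)) = ennreal Pd"
  proof -
    have "of_bool b * ennreal x = ennreal (of_bool b * x)" for b x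
      by (cases b) simp_all
    then show ?thesis
      unfolding Pd_def by (simp only:) (rule sum_ennreal, simp)
  qed
  then have split_d: "ennreal p = ennreal Pd + ?tail_d"
    using suminf_split_tail_ennreal[of "\<lambda>j. of_bool (bdig p j) * ennreal ((1/2) ^ j)" k]
      bdig_suminf_ennreal[OF p] by simp
  have "Pc \<le> Pd"
  proof -
    have "ennreal Pc \<le> ennreal p"
      using split_c by (metis le_iff_add)
    then have "Pc * 2 ^ k \<le> p * 2 ^ k"
      using p by simp
    then have "real (\<Sum>j<Suc k. c j * 2 ^ (k - j)) \<le> \<lfloor>p * 2 ^ k\<rfloor>"
      unfolding Pc_def sum_dyadic_scaled by (metis le_floor_iff of_int_of_nat_eq of_int_le_iff)
    then show ?thesis
      unfolding Pd_def sum_bdig_lessThan[OF p] Pc_def sum_dyadic_scaled[symmetric]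
      by (simp add: field_simps)
  qed
  have "?tail_d = ennreal p - ennreal Pd"
    using split_d by simp
  also have "\<dots> \<le> ennreal p - ennreal Pc"
    using \<open>Pc \<le> Pd\<close> by (intro ennreal_minus_mono ennreal_leI) auto
  also have "\<dots> = ?tail_c"
    using split_c by simp
  finally show ?thesis .
qed

text \<open>Knuth and Yao's argument: the weighted sum \<open>\<Sum>j. j * w j\<close> is the sum of all tails
  \<open>\<Sum>j>k. w j\<close>, and these are compared one by one.\<close>
lemma bdig_weighted_length_le:
  fixes c :: "nat \<Rightarrow> nat"
  assumes "0 \<le> p" "p < 2"
    and "(\<Sum>j. of_nat (c j) * ennreal ((1/2) ^ j)) = ennreal p"
  shows "(\<Sum>j. of_bool (bdig p j) * ennreal (real j * (1/2) ^ j))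
         \<le> (\<Sum>j. of_nat (c j) * ennreal (real j * (1/2) ^ j))"
proof -
  have weighted: "x * ennreal (real j * (1/2) ^ j) = of_nat j * (x * ennreal ((1/2) ^ j))"
    for x :: ennreal and j
    by (simp add: ennreal_mult' ennreal_of_nat_eq_real_of_nat mult_ac)
  show ?thesis
    unfolding weighted suminf_mult_index_eq_sum_tails
    by (intro suminf_le bdig_tail_le assms) simp_all
qed

lemma not_bdig_0_if_less_1: "0 \<le> a \<Longrightarrow> a < 1 \<Longrightarrow> \<not> bdig a 0"
  unfolding bdig_def by (simp add: floor_eq_iff)

lemma bdig_add_carries:
  fixes a0 a1 :: real
  assumes "0 \<le> a0" "0 \<le> a1" "a0 + a1 < 2"
  obtains car :: "nat \<Rightarrow> nat"
  where "car 0 = of_bool (bdig (a0 + a1) 0) - of_bool (bdig a0 0) - of_bool (bdig a1 0)"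
    and "\<And>m. car m \<le> 1"
    and "\<And>m. int (car (Suc m)) + of_bool (bdig a0 (Suc m)) + of_bool (bdig a1 (Suc m))
               = of_bool (bdig (a0 + a1) (Suc m)) + 2 * int (car m)"
proof
  define car where "car m = nat (\<lfloor>(a0 + a1) * 2 ^ m\<rfloor> - \<lfloor>a0 * 2 ^ m\<rfloor> - \<lfloor>a1 * 2 ^ m\<rfloor>)" for m
  have car: "int (car m) = \<lfloor>(a0 + a1) * 2 ^ m\<rfloor> - \<lfloor>a0 * 2 ^ m\<rfloor> - \<lfloor>a1 * 2 ^ m\<rfloor>"
    and "car m \<le> 1" for m
    unfolding car_def by (simp_all add: distrib_right, linarith+)
  then show "car m \<le> 1" for m
    by simp
  show "int (car (Suc m)) + of_bool (bdig a0 (Suc m)) + of_bool (bdig a1 (Suc m))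
          = of_bool (bdig (a0 + a1) (Suc m)) + 2 * int (car m)" for m
    using bdig_Suc[of a0 m] bdig_Suc[of a1 m] bdig_Suc[of "a0 + a1" m] car[of m] car[of "Suc m"]
    by simp
  have "\<lfloor>a0\<rfloor> \<in> {0, 1}" "\<lfloor>a1\<rfloor> \<in> {0, 1}" "\<lfloor>a0 + a1\<rfloor> \<in> {0, 1}"
    using assms by (auto simp: floor_eq_iff)
  then show "car 0 = of_bool (bdig (a0 + a1) 0) - of_bool (bdig a0 0) - of_bool (bdig a1 0)"
    using car[of 0] unfolding bdig_def by auto
qed

text \<open>Here \<open>z = x + y\<close> in binary, digit \<open>0\<close> being the integer part and \<open>car m\<close> the carry
  into digit \<open>m\<close> from the less significant ones. The induction invariant: up to digit \<open>m\<close> the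
  left sum exceeds the right one by \<open>car m * \<beta> m\<close>; a pending carry is settled by \<open>\<beta> m\<close>,
  which unfolds into digit \<open>m + 1\<close> of \<open>x\<close> and \<open>y\<close>.\<close>
lemma sum_digits_carry_split:
  fixes x y z :: "nat \<Rightarrow> bool" and car \<beta> :: "nat \<Rightarrow> nat" and \<alpha> :: "bool \<Rightarrow> nat \<Rightarrow> nat"
  assumes car_0: "car 0 = of_bool (z 0)" and "\<not> x 0" "\<not> y 0"
    and car_Suc: "\<And>m. int (car (Suc m)) + of_bool (x (Suc m)) + of_bool (y (Suc m))
                        = of_bool (z (Suc m)) + 2 * int (car m)"
    and car_le: "\<And>m. car m \<le> 1"
    and "\<beta> k = 0"
    and \<beta>_Suc: "\<And>m. m < k \<Longrightarrow> \<beta> m = (if x (Suc m) then \<alpha> False (Suc m) else \<beta> (Suc m))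
                                   + (if y (Suc m) then \<alpha> True (Suc m) else \<beta> (Suc m))"
  shows "(\<Sum>L\<le>k. if z L then (if 0 < L \<and> x L \<noteq> y L then \<alpha> (y L) L else \<beta> L) else 0)
       = (\<Sum>L\<le>k. if x L then \<alpha> False L else 0) + (\<Sum>L\<le>k. if y L then \<alpha> True L else 0)"
proof -
  let ?V = "\<lambda>L. if z L then (if 0 < L \<and> x L \<noteq> y L then \<alpha> (y L) L else \<beta> L) else 0"
  have "(\<Sum>L\<le>m. ?V L) = car m * \<beta> m + (\<Sum>L\<le>m. if x L then \<alpha> False L else 0)
                                        + (\<Sum>L\<le>m. if y L then \<alpha> True L else 0)"
    if "m \<le> k" for m
    using that
  proof (induction m)
    case 0
    then show ?case
      using car_0 \<open>\<not> x 0\<close> \<open>\<not> y 0\<close> by simp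
  next
    case (Suc m)
    have "car m \<in> {0, 1}" "car (Suc m) \<in> {0, 1}"
      using car_le[of m] car_le[of "Suc m"] by auto
    then show ?case
      using Suc car_Suc[of m] \<beta>_Suc[of m]
      by (cases "x (Suc m)"; cases "y (Suc m)"; cases "z (Suc m)"; auto)
  qed
  from this[of k] show ?thesis
    using \<open>\<beta> k = 0\<close> by simp
qed

lemma finite_lists_length_eq_Collect: "finite {u :: 'a::finite list. length u = j \<and> P u}"
  by (rule finite_subset[OF _ finite_lists_length_eq[of UNIV j]]) auto

lemma finite_lists_length_less_Collect: "finite {u :: 'a::finite list. length u < N \<and> P u}"
  by (rule finite_subset[OF _ finite_lists_length_le[of UNIV N]]) auto

lemma card_lists_length_Suc:
  "card {w :: bool list. length w = Suc j \<and> P w}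
     = card {w. length w = j \<and> P (False # w)} + card {w. length w = j \<and> P (True # w)}"
proof -
  have split: "{w :: bool list. length w = Suc j \<and> P w}
      = Cons False ` {w. length w = j \<and> P (False # w)} \<union> Cons True ` {w. length w = j \<and> P (True # w)}"
  proof (intro set_eqI iffI)
    fix w :: "bool list"
    assume "w \<in> {w. length w = Suc j \<and> P w}"
    then obtain a v where "w = a # v" "length v = j" "P (a # v)"
      by (cases w) auto
    then show "w \<in> Cons False ` {w. length w = j \<and> P (False # w)} \<union> Cons True ` {w. length w = j \<and> P (True # w)}"
      by (cases a) auto
  qed auto
  show ?thesis
    unfolding split by (subst card_Un_disjoint) (auto simp: finite_lists_length_eq_Collect card_image)
qed

lemma infsum_length_eq_suminf:
  fixes g :: "nat \<Rightarrow> ennreal" and U :: "'a::finite list set"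
  shows "(\<Sum>\<^sub>\<infinity>u\<in>U. g (length u)) = (\<Sum>j. of_nat (card {u\<in>U. length u = j}) * g j)"
proof -
  let ?U = "\<lambda>N. {u\<in>U. length u < N}"
  have fin: "finite (?U N)" for N
    using finite_lists_length_less_Collect[of N "\<lambda>u. u \<in> U"] by (simp add: conj_commute)
  have partial: "(\<Sum>j<N. of_nat (card {u\<in>U. length u = j}) * g j) = (\<Sum>u\<in>?U N. g (length u))" for N
  proof -
    have "(\<Sum>u\<in>?U N. g (length u)) = (\<Sum>j<N. \<Sum>u\<in>{u \<in> ?U N. length u = j}. g (length u))"
      by (rule sum.group[symmetric]) (auto simp: fin)
    also have "\<dots> = (\<Sum>j<N. of_nat (card {u\<in>U. length u = j}) * g j)"
    proof (intro sum.cong refl)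
      fix j assume "j \<in> {..<N}"
      then have "{u \<in> ?U N. length u = j} = {u\<in>U. length u = j}"
        by auto
      then show "(\<Sum>u\<in>{u \<in> ?U N. length u = j}. g (length u)) = of_nat (card {u\<in>U. length u = j}) * g j"
        by simp
    qed
    finally show ?thesis ..
  qed
  have "(\<Sum>\<^sub>\<infinity>u\<in>U. g (length u)) = (SUP F\<in>{F. finite F \<and> F \<subseteq> U}. \<Sum>u\<in>F. g (length u))"
    by (rule nonneg_infsum_complete) simp
  also have "\<dots> = (SUP N. \<Sum>u\<in>?U N. g (length u))"
  proof (rule antisym)
    show "(SUP F\<in>{F. finite F \<and> F \<subseteq> U}. \<Sum>u\<in>F. g (length u)) \<le> (SUP N. \<Sum>u\<in>?U N. g (length u))"
    proof (rule SUP_least)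
      fix F assume "F \<in> {F. finite F \<and> F \<subseteq> U}"
      then have "F \<subseteq> ?U (Suc (Max (length ` F)))" "finite F"
        by (auto simp: le_imp_less_Suc)
      then have "(\<Sum>u\<in>F. g (length u)) \<le> (\<Sum>u\<in>?U (Suc (Max (length ` F))). g (length u))"
        by (intro sum_mono2[OF fin]) auto
      also have "\<dots> \<le> (SUP N. \<Sum>u\<in>?U N. g (length u))"
        by (rule SUP_upper) simp
      finally show "(\<Sum>u\<in>F. g (length u)) \<le> (SUP N. \<Sum>u\<in>?U N. g (length u))" .
    qed
    show "(SUP N. \<Sum>u\<in>?U N. g (length u)) \<le> (SUP F\<in>{F. finite F \<and> F \<subseteq> U}. \<Sum>u\<in>F. g (length u))"
      by (rule SUP_least, rule SUP_upper) (auto simp: fin)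
  qed
  also have "\<dots> = (\<Sum>j. of_nat (card {u\<in>U. length u = j}) * g j)"
    unfolding suminf_eq_SUP partial ..
  finally show ?thesis .
qed

lemma infsum_length_Some_in:
  fixes Y :: "'a::finite list \<Rightarrow> 'b option" and g :: "nat \<Rightarrow> ennreal"
  assumes "finite S"
  shows "(\<Sum>\<^sub>\<infinity>u\<in>{u. \<exists>s\<in>S. Y u = Some s}. g (length u))
       = (\<Sum>s\<in>S. \<Sum>j. of_nat (card {u. Y u = Some s \<and> length u = j}) * g j)"
proof -
  have "card {u \<in> {u. \<exists>s\<in>S. Y u = Some s}. length u = j} = (\<Sum>s\<in>S. card {u. Y u = Some s \<and> length u = j})"
    for j
  proof -
    have "{u \<in> {u. \<exists>s\<in>S. Y u = Some s}. length u = j} = (\<Union>s\<in>S. {u. Y u = Some s \<and> length u = j})"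
      by auto
    moreover have "finite {u. Y u = Some s \<and> length u = j}" for s
      using finite_lists_length_eq_Collect[of j "\<lambda>u. Y u = Some s"] by (simp add: conj_commute)
    ultimately show ?thesis
      using assms by (simp only:) (intro card_UN_disjoint, auto)
  qed
  then show ?thesis
    unfolding infsum_length_eq_suminf
    by (simp add: sum_distrib_right suminf_sum[symmetric])
qed

lemma finite_strs: "finite (strs n)"
  unfolding strs_def using finite_lists_length_eq[of "UNIV :: bool set" n] by simp

lemma prefix_snoc_cases:
  "prefix b c \<Longrightarrow> length b < length c \<Longrightarrow> prefix (b @ [False]) c \<or> prefix (b @ [True]) c"
proof -
  assume "prefix b c" "length b < length c"
  then obtain z zs where "c = b @ z # zs"
    by (metis prefix_def append_Nil2 less_not_refl neq_Nil_conv)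
  then show ?thesis
    by (cases z) (auto simp: prefix_def)
qed

lemma not_prefix_snoc_False_True: "prefix (b @ [False]) c \<Longrightarrow> \<not> prefix (b @ [True]) c"
  by (auto simp: prefix_def)

lemma lexordp_snoc_False_True: "ord_class.lexordp (b @ False # x) (b @ True # y)"
  by (rule ord_class.lexordp_append_left_rightI) simp

lemma not_lexordp_snoc_True_False: "\<not> ord_class.lexordp (b @ True # x) (b @ False # y)"
  by (induction b) auto

lemma sum_strs_prefix_split:
  assumes "length b < n"
  shows "(\<Sum>c\<in>{c \<in> strs n. prefix b c \<and> P c}. f c)
       = (\<Sum>c\<in>{c \<in> strs n. prefix (b @ [False]) c \<and> P c}. f c)
         + (\<Sum>c\<in>{c \<in> strs n. prefix (b @ [True]) c \<and> P c}. f c)"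
proof -
  have split: "{c \<in> strs n. prefix b c \<and> P c}
      = {c \<in> strs n. prefix (b @ [False]) c \<and> P c} \<union> {c \<in> strs n. prefix (b @ [True]) c \<and> P c}"
    using assms prefix_snoc_cases[of b] by (auto simp: strs_def dest: append_prefixD)
  show ?thesis
    unfolding split using not_prefix_snoc_False_True
    by (subst sum.union_disjoint) (auto intro: finite_subset[OF _ finite_strs])
qed

locale finite_cdf =
  fixes n :: nat and \<phi> :: "bool list \<Rightarrow> bool list" and F :: "bool list \<Rightarrow> real"
  assumes bij: "bij_betw \<phi> (strs n) (strs n)"
    and F_range: "\<And>s. s \<in> strs n \<Longrightarrow> 0 \<le> F s \<and> F s \<le> 1"
    and F_top: "F (\<phi> (replicate n True)) = 1"
    and F_mono: "\<And>c c'. c \<in> strs n \<Longrightarrow> c' \<in> strs n \<Longrightarrow> ord_class.lexordp c c'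
                   \<Longrightarrow> F (\<phi> c) \<le> F (\<phi> c')"
begin

text \<open>A node \<open>b\<close> of the code tree (\<open>length b \<le> n\<close>) covers the outputs \<open>\<phi> c\<close> of the codes
  \<open>c\<close> extending it, i.e.\ the CDF values in \<open>(node_lo b, node_hi b]\<close>. The lower end is the upper
  end of the left sibling of the deepest right turn of \<open>b\<close>.\<close>
definition node_hi :: "bool list \<Rightarrow> real" where
  "node_hi b = F (\<phi> (b @ replicate (n - length b) True))"

definition node_lo :: "bool list \<Rightarrow> real" where
  "node_lo b = (if True \<in> set b then node_hi (rev (tl (dropWhile Not (rev b))) @ [False]) else 0)"

definition mass :: "bool list \<Rightarrow> real" where
  "mass b = node_hi b - node_lo b"

lemma phi_strs: "c \<in> strs n \<Longrightarrow> \<phi> c \<in> strs n"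
  by (rule bij_betw_apply[OF bij])

lemma node_hi_range: "length b \<le> n \<Longrightarrow> 0 \<le> node_hi b \<and> node_hi b \<le> 1"
  unfolding node_hi_def by (intro F_range phi_strs) (simp add: strs_def)

lemma node_hi_Nil [simp]: "node_hi [] = 1"
  unfolding node_hi_def using F_top by simp

lemma node_hi_snoc_True: "length b < n \<Longrightarrow> node_hi (b @ [True]) = node_hi b"
proof -
  assume "length b < n"
  then have "n - length b = Suc (n - Suc (length b))"
    by simp
  then show ?thesis
    unfolding node_hi_def by simp
qed

lemma node_lo_Nil [simp]: "node_lo [] = 0"
  unfolding node_lo_def by simp

lemma node_lo_snoc_False [simp]: "node_lo (b @ [False]) = node_lo b"
  unfolding node_lo_def by simp

lemma node_lo_snoc_True [simp]: "node_lo (b @ [True]) = node_hi (b @ [False])"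
  unfolding node_lo_def by simp

lemma node_lo_le_F:
  "length (b @ e) = n \<Longrightarrow> node_lo b \<le> F (\<phi> (b @ e))"
proof (induction b arbitrary: e rule: rev_induct)
  case Nil
  then show ?case
    using F_range[OF phi_strs] by (simp add: strs_def)
next
  case (snoc x b)
  show ?case
  proof (cases x)
    case True
    have "node_lo (b @ [x]) = F (\<phi> (b @ False # replicate (n - Suc (length b)) True))"
      using True by (simp add: node_hi_def)
    also have "\<dots> \<le> F (\<phi> (b @ True # e))"
      using snoc.prems by (intro F_mono) (auto simp: strs_def lexordp_snoc_False_True)
    finally show ?thesis
      using True by simp
  next
    case False
    then show ?thesis
      using snoc.IH[of "False # e"] snoc.prems by simp
  qed
qed

lemma node_lo_nonneg: "length b \<le> n \<Longrightarrow> 0 \<le> node_lo b"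
proof (induction b rule: rev_induct)
  case (snoc x b)
  then show ?case
    using node_hi_range[of "b @ [False]"] by (cases x) auto
qed simp

lemma mass_nonneg: "length b \<le> n \<Longrightarrow> 0 \<le> mass b"
  unfolding mass_def node_hi_def using node_lo_le_F[of b] by simp

lemma mass_le_1: "length b \<le> n \<Longrightarrow> mass b \<le> 1"
  unfolding mass_def using node_hi_range node_lo_nonneg by force

lemma mass_Nil [simp]: "mass [] = 1"
  unfolding mass_def by simp

lemma mass_snoc_False: "mass (b @ [False]) = node_hi (b @ [False]) - node_lo b"
  unfolding mass_def by simp

lemma mass_snoc_True: "length b < n \<Longrightarrow> mass (b @ [True]) = node_hi b - node_hi (b @ [False])"
  unfolding mass_def by (simp add: node_hi_snoc_True)

lemma mass_snoc_add: "length b < n \<Longrightarrow> mass (b @ [False]) + mass (b @ [True]) = mass b"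
  unfolding mass_snoc_False mass_snoc_True by (simp add: mass_def)

text \<open>Opt is only ever called with the interval \<open>(f0, f1] = (node_lo b, node_hi b]\<close> of its current
  node \<open>b\<close>.\<close>
definition opt_node :: "bool list \<Rightarrow> nat \<Rightarrow> bool list \<Rightarrow> (bool list \<times> bool list) option" where
  "opt_node b L u = opt n \<phi> F b L (node_lo b) (node_hi b) u"

definition loop_run :: "bool list \<Rightarrow> nat \<Rightarrow> bool list \<Rightarrow> (bool list \<times> bool list) option" where
  "loop_run b L u = Option.bind (opt_loop (mass (b @ [False])) (mass (b @ [True])) L u)
     (\<lambda>(x, L', r). opt_node (b @ [x]) L' r)"

lemma opt_gen_Some_iff: "opt_gen n \<phi> F u = Some s \<longleftrightarrow> opt_node [] 0 u = Some (s, [])"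
  unfolding opt_gen_def opt_node_def by (auto split: option.splits list.splits prod.splits)

lemma opt_node_leaf: "length b = n \<Longrightarrow> opt_node b L u = Some (\<phi> b, u)"
  unfolding opt_node_def by (subst opt.simps) simp

text \<open>In the third case \<open>b @ [bdig (mass (b @ [True])) L]\<close> is the child whose mass has
  digit \<open>1\<close> at level \<open>L\<close>.\<close>
lemma opt_node_step:
  assumes "length b < n"
  shows "opt_node b L u =
    (if mass (b @ [True]) = 0 then opt_node (b @ [False]) L u
     else if mass (b @ [False]) = 0 then opt_node (b @ [True]) L u
     else if 0 < L \<and> bdig (mass (b @ [False])) L \<noteq> bdig (mass (b @ [True])) L
       then opt_node (b @ [bdig (mass (b @ [True])) L]) L u
     else loop_run b L u)"
proof -
  have split: "split_val n \<phi> F b = node_hi (b @ [False])"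
    using assms unfolding split_val_def node_hi_def by simp
  have cont: "(\<lambda>r. if fst r then opt n \<phi> F (b @ [True]) (fst (snd r)) (node_hi (b @ [False])) (node_hi b) (snd (snd r))
                 else opt n \<phi> F (b @ [False]) (fst (snd r)) (node_lo b) (node_hi (b @ [False])) (snd (snd r)))
      = (\<lambda>(x, L', r). opt_node (b @ [x]) L' r)"
    using assms by (auto simp: opt_node_def node_hi_snoc_True)
  show ?thesis
    unfolding opt_node_def[of b] opt.simps[of n \<phi> F b] split cont
      loop_run_def mass_snoc_False mass_snoc_True[OF assms]
    using assms by (auto simp: opt_node_def node_hi_snoc_True)
qed

lemma loop_run_Nil [simp]: "loop_run b L [] = None"
  unfolding loop_run_def by (simp add: opt_loop.simps)

lemma loop_run_Cons:
  "loop_run b L (x # w) =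
     (if bdig (mass (b @ [x])) (Suc L) then opt_node (b @ [x]) (Suc L) w else loop_run b (Suc L) w)"
  unfolding loop_run_def by (subst opt_loop.simps) (cases x; simp)

lemma opt_node_append:
  assumes "length b \<le> n" "opt_node b L u = Some (s, r)"
  shows "opt_node b L (u @ t) = Some (s, r @ t) \<and> s \<in> strs n"
  using assms
proof (induction "n - length b" arbitrary: b L u r)
  case 0
  then show ?case
    using opt_node_leaf phi_strs by (auto simp: strs_def)
next
  case (Suc k)
  then have b: "length b < n"
    by simp
  have IH: "opt_node (b @ [x]) L' (v @ t) = Some (s, r' @ t) \<and> s \<in> strs n"
    if "opt_node (b @ [x]) L' v = Some (s, r')" for x L' v r'
    using Suc.hyps(1)[of "b @ [x]" L' v r'] Suc.hyps(2) b that by simp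
  have loop: "loop_run b L' (v @ t) = Some (s, r' @ t) \<and> s \<in> strs n"
    if "loop_run b L' v = Some (s, r')" for L' v r'
    using that
  proof (induction v arbitrary: L')
    case (Cons x v)
    then show ?case
      using IH by (simp add: loop_run_Cons split: if_splits)
  qed simp
  from Suc.prems(2) show ?case
    unfolding opt_node_step[OF b] by (auto split: if_splits dest: IH loop)
qed

definition npaths :: "bool list \<Rightarrow> nat \<Rightarrow> bool list \<Rightarrow> nat \<Rightarrow> nat" where
  "npaths b L c j = card {w. length w = j \<and> opt_node b L w = Some (\<phi> c, [])}"

definition loop_npaths :: "bool list \<Rightarrow> nat \<Rightarrow> bool list \<Rightarrow> nat \<Rightarrow> nat" where
  "loop_npaths b L c j = card {w. length w = j \<and> loop_run b L w = Some (\<phi> c, [])}"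

lemma npaths_leaf:
  assumes "length b = n" "c \<in> strs n"
  shows "npaths b L c j = of_bool (j = 0 \<and> b = c)"
proof -
  have "\<phi> b = \<phi> c \<longleftrightarrow> b = c"
    using assms bij by (auto simp: strs_def bij_betw_def inj_on_def)
  then have "{w. length w = j \<and> opt_node b L w = Some (\<phi> c, [])} = (if j = 0 \<and> b = c then {[]} else {})"
    using opt_node_leaf[OF assms(1)] by auto
  then show ?thesis
    unfolding npaths_def by simp
qed

lemma npaths_step:
  assumes "length b < n"
  shows "npaths b L c j =
    (if mass (b @ [True]) = 0 then npaths (b @ [False]) L c j
     else if mass (b @ [False]) = 0 then npaths (b @ [True]) L c j
     else if 0 < L \<and> bdig (mass (b @ [False])) L \<noteq> bdig (mass (b @ [True])) L
       then npaths (b @ [bdig (mass (b @ [True])) L]) L c j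
     else loop_npaths b L c j)"
  unfolding npaths_def[of b] loop_npaths_def opt_node_step[OF assms]
  by (simp add: npaths_def)

lemma loop_npaths_0: "loop_npaths b L c 0 = 0"
  unfolding loop_npaths_def by simp

lemma loop_npaths_Suc:
  "loop_npaths b L c (Suc j) =
     (if bdig (mass (b @ [False])) (Suc L) then npaths (b @ [False]) (Suc L) c j else loop_npaths b (Suc L) c j)
     + (if bdig (mass (b @ [True])) (Suc L) then npaths (b @ [True]) (Suc L) c j else loop_npaths b (Suc L) c j)"
  unfolding loop_npaths_def[of b L] card_lists_length_Suc loop_run_Cons
  by (simp add: npaths_def loop_npaths_def)

text \<open>The Knuth--Yao tree of the output distribution contains node \<open>b\<close> once at each level
  \<open>L\<close> where \<open>mass b\<close> has a binary digit \<open>1\<close>; the procedure enters \<open>b\<close> at exactly these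
  levels. So \<open>entry_paths b c k\<close> counts the paths of length \<open>k\<close> through \<open>b\<close> ending in \<open>\<phi> c\<close>.\<close>
definition entry_paths :: "bool list \<Rightarrow> bool list \<Rightarrow> nat \<Rightarrow> nat" where
  "entry_paths b c k = (\<Sum>L\<le>k. if bdig (mass b) L then npaths b L c (k - L) else 0)"

lemma entry_paths_leaf:
  assumes "length b = n" "c \<in> strs n"
  shows "entry_paths b c k = of_bool (b = c \<and> bdig (mass c) k)"
proof -
  have "entry_paths b c k = (\<Sum>L\<le>k. if L = k then of_bool (b = c \<and> bdig (mass b) k) else 0)"
    unfolding entry_paths_def npaths_leaf[OF assms] by (intro sum.cong) auto
  then show ?thesis
    by auto
qed

lemma entry_paths_split_nondegenerate:
  assumes b: "length b < n" and pos: "mass (b @ [False]) \<noteq> 0" "mass (b @ [True]) \<noteq> 0"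
  shows "entry_paths b c k = entry_paths (b @ [False]) c k + entry_paths (b @ [True]) c k"
proof -
  define a0 where "a0 = mass (b @ [False])"
  define a1 where "a1 = mass (b @ [True])"
  have "0 < a0" "0 < a1" "a0 + a1 \<le> 1"
    using pos mass_nonneg[of "b @ [False]"] mass_nonneg[of "b @ [True]"] mass_le_1[of b]
      mass_snoc_add[OF b] b unfolding a0_def a1_def by auto
  then have digit_0: "\<not> bdig a0 0" "\<not> bdig a1 0"
    by (simp_all add: not_bdig_0_if_less_1)
  have "0 \<le> a0" "0 \<le> a1" "a0 + a1 < 2"
    using \<open>0 < a0\<close> \<open>0 < a1\<close> \<open>a0 + a1 \<le> 1\<close> by simp_all
  then obtain car :: "nat \<Rightarrow> nat"
    where car_0: "car 0 = of_bool (bdig (a0 + a1) 0) - of_bool (bdig a0 0) - of_bool (bdig a1 0)"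
      and car_le: "\<And>m. car m \<le> 1"
      and car_Suc: "\<And>m. int (car (Suc m)) + of_bool (bdig a0 (Suc m)) + of_bool (bdig a1 (Suc m))
                          = of_bool (bdig (a0 + a1) (Suc m)) + 2 * int (car m)"
    using bdig_add_carries by blast
  have npaths_b: "npaths b L c j = (if 0 < L \<and> bdig a0 L \<noteq> bdig a1 L
      then npaths (b @ [bdig a1 L]) L c j else loop_npaths b L c j)" for L j
    using npaths_step[OF b] pos unfolding a0_def a1_def by simp
  have "entry_paths b c k
      = (\<Sum>L\<le>k. if bdig (a0 + a1) L then (if 0 < L \<and> bdig a0 L \<noteq> bdig a1 L
           then npaths (b @ [bdig a1 L]) L c (k - L) else loop_npaths b L c (k - L)) else 0)"
    unfolding entry_paths_def npaths_b mass_snoc_add[OF b, symmetric] a0_def a1_def ..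
  also have "\<dots> = (\<Sum>L\<le>k. if bdig a0 L then npaths (b @ [False]) L c (k - L) else 0)
                  + (\<Sum>L\<le>k. if bdig a1 L then npaths (b @ [True]) L c (k - L) else 0)"
  proof (rule sum_digits_carry_split[where car = car and \<beta> = "\<lambda>L. loop_npaths b L c (k - L)"])
    show "car 0 = of_bool (bdig (a0 + a1) 0)"
      using car_0 digit_0 by simp
    show "loop_npaths b m c (k - m) =
        (if bdig a0 (Suc m) then npaths (b @ [False]) (Suc m) c (k - Suc m) else loop_npaths b (Suc m) c (k - Suc m))
      + (if bdig a1 (Suc m) then npaths (b @ [True]) (Suc m) c (k - Suc m) else loop_npaths b (Suc m) c (k - Suc m))"
      if "m < k" for m
      using loop_npaths_Suc[of b m c "k - Suc m"] that
      unfolding a0_def a1_def by (simp add: Suc_diff_Suc)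
  qed (use digit_0 car_le car_Suc loop_npaths_0 in simp_all)
  finally show ?thesis
    unfolding entry_paths_def a0_def a1_def .
qed

lemma entry_paths_split:
  assumes b: "length b < n"
  shows "entry_paths b c k = entry_paths (b @ [False]) c k + entry_paths (b @ [True]) c k"
proof -
  consider (no_right) "mass (b @ [True]) = 0"
    | (no_left) "mass (b @ [False]) = 0" "mass (b @ [True]) \<noteq> 0"
    | (both) "mass (b @ [False]) \<noteq> 0" "mass (b @ [True]) \<noteq> 0"
    by blast
  then show ?thesis
  proof cases
    case no_right
    then have "npaths b = npaths (b @ [False])" "mass b = mass (b @ [False])"
      using npaths_step[OF b] mass_snoc_add[OF b] by (simp_all add: fun_eq_iff)
    then show ?thesis
      using no_right unfolding entry_paths_def by (simp only:) simp
  next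
    case no_left
    then have "npaths b = npaths (b @ [True])" "mass b = mass (b @ [True])"
      using npaths_step[OF b] mass_snoc_add[OF b] by (simp_all add: fun_eq_iff)
    then show ?thesis
      using no_left unfolding entry_paths_def by (simp only:) simp
  next
    case both
    then show ?thesis
      by (rule entry_paths_split_nondegenerate[OF b])
  qed
qed

lemma entry_paths_eq:
  assumes "length b \<le> n" "c \<in> strs n"
  shows "entry_paths b c k = of_bool (prefix b c \<and> bdig (mass c) k)"
  using assms(1)
proof (induction "n - length b" arbitrary: b)
  case 0
  then have "prefix b c \<longleftrightarrow> b = c"
    using assms(2) by (auto simp: strs_def prefix_def)
  then show ?case
    using 0 entry_paths_leaf[OF _ assms(2)] by simp
next
  case (Suc h)
  then have b: "length b < n"
    by simp
  have "prefix b c \<longleftrightarrow> prefix (b @ [False]) c \<or> prefix (b @ [True]) c"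
    using prefix_snoc_cases[of b c] b assms(2) by (auto simp: strs_def dest: append_prefixD)
  then show ?case
    using Suc.hyps(1)[of "b @ [False]"] Suc.hyps(1)[of "b @ [True]"] Suc.hyps(2) b
      not_prefix_snoc_False_True[of b c]
    unfolding entry_paths_split[OF b] by auto
qed

lemma card_opt_gen_length:
  assumes "c \<in> strs n"
  shows "card {u. opt_gen n \<phi> F u = Some (\<phi> c) \<and> length u = k} = of_bool (bdig (mass c) k)"
proof -
  have "card {u. opt_gen n \<phi> F u = Some (\<phi> c) \<and> length u = k} = npaths [] 0 c k"
    unfolding npaths_def opt_gen_Some_iff by (simp add: conj_commute)
  also have "\<dots> = entry_paths [] c k"
    unfolding entry_paths_def by (simp add: bdig_1_iff)
  also have "\<dots> = of_bool (bdig (mass c) k)"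
    using entry_paths_eq[of "[]"] assms by simp
  finally show ?thesis .
qed

lemma sum_mass_extensions:
  "length b \<le> n \<Longrightarrow> (\<Sum>c\<in>{c \<in> strs n. prefix b c}. mass c) = mass b"
proof (induction "n - length b" arbitrary: b)
  case 0
  then have "{c \<in> strs n. prefix b c} = {b}"
    by (auto simp: strs_def prefix_def)
  then show ?case
    by simp
next
  case (Suc h)
  then have b: "length b < n"
    by simp
  show ?case
    using sum_strs_prefix_split[OF b, where P = "\<lambda>_. True" and f = mass] Suc.hyps(1)[of "b @ [False]"]
      Suc.hyps(1)[of "b @ [True]"] Suc.hyps(2) b mass_snoc_add[OF b]
    by simp
qed

lemma sum_mass_extensions_upto:
  assumes "length b \<le> n" "d \<in> strs n" "prefix b d"
  shows "(\<Sum>c\<in>{c \<in> strs n. prefix b c \<and> (c = d \<or> ord_class.lexordp c d)}. mass c) = F (\<phi> d) - node_lo b"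
  using assms
proof (induction "n - length b" arbitrary: b)
  case 0
  then have "length b = n"
    by simp
  then have "{c \<in> strs n. prefix b c \<and> (c = d \<or> ord_class.lexordp c d)} = {b}" "d = b"
    "mass b = F (\<phi> b) - node_lo b"
    using 0 by (auto simp: strs_def prefix_def mass_def node_hi_def)
  then show ?case
    by simp
next
  case (Suc h)
  then have b: "length b < n"
    by simp
  let ?upto = "\<lambda>c. c = d \<or> ord_class.lexordp c d"
  have IH: "(\<Sum>c\<in>{c \<in> strs n. prefix (b @ [x]) c \<and> ?upto c}. mass c) = F (\<phi> d) - node_lo (b @ [x])"
    if "prefix (b @ [x]) d" for x
    using Suc.hyps(1)[of "b @ [x]"] Suc.hyps(2) Suc.prems that b by simp
  have "prefix (b @ [False]) d \<or> prefix (b @ [True]) d"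
    using prefix_snoc_cases[OF Suc.prems(3)] b Suc.prems(2) by (simp add: strs_def)
  then show ?case
  proof
    assume d: "prefix (b @ [False]) d"
    have empty: "{c \<in> strs n. prefix (b @ [True]) c \<and> ?upto c} = {}"
      using d not_lexordp_snoc_True_False by (auto simp: prefix_def)
    from sum_strs_prefix_split[OF b, where P = ?upto and f = mass] show ?thesis
      unfolding empty using IH[OF d] by simp
  next
    assume d: "prefix (b @ [True]) d"
    have "{c \<in> strs n. prefix (b @ [False]) c \<and> ?upto c} = {c \<in> strs n. prefix (b @ [False]) c}"
      using d lexordp_snoc_False_True by (auto simp: prefix_def)
    then show ?thesis
      using sum_strs_prefix_split[OF b, where P = ?upto and f = mass] IH[OF d] b
        sum_mass_extensions[of "b @ [False]"] by (simp add: mass_snoc_False)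
  qed
qed

abbreviation code :: "bool list \<Rightarrow> bool list" where
  "code \<equiv> inv_into (strs n) \<phi>"

lemma code_strs: "s \<in> strs n \<Longrightarrow> code s \<in> strs n"
  using bij by (simp add: bij_betw_def inv_into_into)

lemma phi_code: "s \<in> strs n \<Longrightarrow> \<phi> (code s) = s"
  using bij by (simp add: bij_betw_def f_inv_into_f)

lemma code_phi: "c \<in> strs n \<Longrightarrow> code (\<phi> c) = c"
  using bij by (simp add: bij_betw_def inv_into_f_f)

lemma opt_gen_strs: "opt_gen n \<phi> F u = Some s \<Longrightarrow> s \<in> strs n"
  using opt_node_append[of "[]" 0 u s "[]"] by (simp add: opt_gen_Some_iff)

lemma infsum_opt_gen:
  assumes "S \<subseteq> strs n"
  shows "(\<Sum>\<^sub>\<infinity>u\<in>{u. \<exists>s\<in>S. opt_gen n \<phi> F u = Some s}. ennreal ((1/2) ^ length u))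
       = ennreal (\<Sum>s\<in>S. mass (code s))"
proof -
  have mass_code: "0 \<le> mass (code s) \<and> mass (code s) \<le> 1" if "s \<in> S" for s
    using that assms code_strs mass_nonneg mass_le_1 by (force simp: strs_def)
  have "(\<Sum>\<^sub>\<infinity>u\<in>{u. \<exists>s\<in>S. opt_gen n \<phi> F u = Some s}. ennreal ((1/2) ^ length u))
      = (\<Sum>s\<in>S. \<Sum>j. of_nat (card {u. opt_gen n \<phi> F u = Some s \<and> length u = j}) * ennreal ((1/2) ^ j))"
    by (rule infsum_length_Some_in[OF finite_subset[OF assms finite_strs]])
  also have "\<dots> = (\<Sum>s\<in>S. ennreal (mass (code s)))"
  proof (rule sum.cong)
    fix s
    assume "s \<in> S"
    then have "card {u. opt_gen n \<phi> F u = Some s \<and> length u = j} = of_bool (bdig (mass (code s)) j)" for j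
      using card_opt_gen_length[OF code_strs] phi_code assms by force
    then show "(\<Sum>j. of_nat (card {u. opt_gen n \<phi> F u = Some s \<and> length u = j}) * ennreal ((1/2) ^ j))
        = ennreal (mass (code s))"
      using bdig_suminf_ennreal[of "mass (code s)"] mass_code[OF \<open>s \<in> S\<close>] by simp
  qed simp
  also have "\<dots> = ennreal (\<Sum>s\<in>S. mass (code s))"
    using mass_code by simp
  finally show ?thesis .
qed

lemma gen_dist_opt_gen: "s \<in> strs n \<Longrightarrow> gen_dist (opt_gen n \<phi> F) s = ennreal (mass (code s))"
  using infsum_opt_gen[of "{s}"] by (simp add: gen_dist_def)

lemma opt_gen_is_generator: "is_generator n (opt_gen n \<phi> F) (gen_dist (opt_gen n \<phi> F))"
  unfolding is_generator_def
proof (intro conjI)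
  show "\<forall>u\<in>dom (opt_gen n \<phi> F). \<forall>v\<in>dom (opt_gen n \<phi> F). prefix u v \<longrightarrow> u = v"
  proof (intro ballI impI)
    fix u v
    assume "u \<in> dom (opt_gen n \<phi> F)" "v \<in> dom (opt_gen n \<phi> F)" "prefix u v"
    then obtain s s' t where "opt_node [] 0 u = Some (s, [])" "opt_node [] 0 v = Some (s', [])" "v = u @ t"
      by (auto simp: opt_gen_Some_iff prefix_def)
    then show "u = v"
      using opt_node_append[of "[]" 0 u s "[]" t] by simp
  qed
  show "ran (opt_gen n \<phi> F) \<subseteq> strs n"
    using opt_gen_strs by (auto simp: ran_def)
  have "dom (opt_gen n \<phi> F) = {u. \<exists>s\<in>strs n. opt_gen n \<phi> F u = Some s}"
    using opt_gen_strs by auto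
  moreover have "(\<Sum>s\<in>strs n. mass (code s)) = 1"
  proof -
    have "(\<Sum>s\<in>strs n. mass (code s)) = (\<Sum>c\<in>strs n. mass c)"
      using sum.reindex_bij_betw[OF bij_betw_inv_into[OF bij], of mass] by simp
    then show ?thesis
      using sum_mass_extensions[of "[]"] by simp
  qed
  ultimately show "(\<Sum>\<^sub>\<infinity>u\<in>dom (opt_gen n \<phi> F). ennreal ((1/2) ^ length u)) = 1"
    using infsum_opt_gen[of "strs n"] by simp
qed simp

lemma opt_gen_cdf:
  assumes x: "x \<in> strs n"
  shows "(\<Sum>\<^sub>\<infinity>u\<in>{u. \<exists>s. opt_gen n \<phi> F u = Some s \<and> B_le n \<phi> s x}. ennreal ((1/2) ^ length u))
       = ennreal (F x)"
proof -
  define S where "S = {s \<in> strs n. B_le n \<phi> s x}"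
  define C where "C = {c \<in> strs n. c = code x \<or> ord_class.lexordp c (code x)}"
  have "S = \<phi> ` C"
  proof
    show "S \<subseteq> \<phi> ` C"
    proof
      fix s
      assume "s \<in> S"
      then have "code s \<in> C" "s = \<phi> (code s)"
        using x code_strs phi_code by (auto simp: S_def C_def B_le_def B_less_def)
      then show "s \<in> \<phi> ` C"
        by blast
    qed
    show "\<phi> ` C \<subseteq> S"
      using x phi_strs code_phi phi_code by (auto simp: S_def C_def B_le_def B_less_def)
  qed
  moreover have "inj_on \<phi> C"
    using bij unfolding C_def bij_betw_def by (auto intro: inj_on_subset)
  ultimately have "(\<Sum>s\<in>S. mass (code s)) = (\<Sum>c\<in>C. mass c)"
    by (simp add: sum.reindex C_def code_phi)
  also have "\<dots> = F x"
    unfolding C_def using sum_mass_extensions_upto[of "[]" "code x"] code_strs[OF x] phi_code[OF x] by simp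
  finally have "(\<Sum>s\<in>S. mass (code s)) = F x" .
  moreover have "{u. \<exists>s. opt_gen n \<phi> F u = Some s \<and> B_le n \<phi> s x} = {u. \<exists>s\<in>S. opt_gen n \<phi> F u = Some s}"
    unfolding S_def using opt_gen_strs by auto
  ultimately show ?thesis
    using infsum_opt_gen[of S] by (simp add: S_def)
qed

lemma opt_gen_entropy_optimal:
  assumes Y: "is_generator n Y (gen_dist (opt_gen n \<phi> F))"
  shows "entropy_cost (opt_gen n \<phi> F) \<le> entropy_cost Y"
proof -
  let ?cost = "\<lambda>Y s. \<Sum>j. of_nat (card {u. Y u = Some s \<and> length u = j}) * ennreal (real j * (1/2) ^ j)"
  have "dom Y = {u. \<exists>s\<in>strs n. Y u = Some s}" "dom (opt_gen n \<phi> F) = {u. \<exists>s\<in>strs n. opt_gen n \<phi> F u = Some s}"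
    using Y opt_gen_strs unfolding is_generator_def by (auto simp: ran_def)
  then have cost: "entropy_cost Y = (\<Sum>s\<in>strs n. ?cost Y s)"
    "entropy_cost (opt_gen n \<phi> F) = (\<Sum>s\<in>strs n. ?cost (opt_gen n \<phi> F) s)"
    unfolding entropy_cost_def by (simp_all only:) (rule infsum_length_Some_in[OF finite_strs])+
  have "?cost (opt_gen n \<phi> F) s \<le> ?cost Y s" if s: "s \<in> strs n" for s
  proof -
    have "gen_dist Y s = (\<Sum>j. of_nat (card {u \<in> {u. Y u = Some s}. length u = j}) * ennreal ((1/2) ^ j))"
      unfolding gen_dist_def by (rule infsum_length_eq_suminf)
    then have "(\<Sum>j. of_nat (card {u. Y u = Some s \<and> length u = j}) * ennreal ((1/2) ^ j)) = gen_dist Y s"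
      by simp
    also have "\<dots> = ennreal (mass (code s))"
      using Y s gen_dist_opt_gen unfolding is_generator_def by simp
    finally have Y_s: "(\<Sum>j. of_nat (card {u. Y u = Some s \<and> length u = j}) * ennreal ((1/2) ^ j))
        = ennreal (mass (code s))" .
    have "card {u. opt_gen n \<phi> F u = Some s \<and> length u = j} = of_bool (bdig (mass (code s)) j)" for j
      using card_opt_gen_length[OF code_strs[OF s]] phi_code[OF s] by simp
    moreover have "0 \<le> mass (code s)" "mass (code s) \<le> 1"
      using code_strs[OF s] mass_nonneg mass_le_1 by (simp_all add: strs_def)
    ultimately show ?thesis
      using bdig_weighted_length_le[OF _ _ Y_s] by simp
  qed
  then show ?thesis
    unfolding cost by (rule sum_mono)
qed

end

theorem theorem5p17:
  fixes n E m :: nat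
    and \<gamma> :: "bool list \<Rightarrow> xreal"
    and \<phi> :: "bool list \<Rightarrow> bool list"
    and F :: "bool list \<Rightarrow> real"
  assumes "binary_number_format n \<gamma> \<phi>"
    and "fp_cdf E m n \<phi> F"
  shows "is_generator n (opt_gen n \<phi> F) (gen_dist (opt_gen n \<phi> F))
    \<and> (\<forall>x\<in>strs n.
         (\<Sum>\<^sub>\<infinity> u \<in> {u. \<exists>s. opt_gen n \<phi> F u = Some s \<and> B_le n \<phi> s x}.
            ennreal ((1/2) ^ length u)) = ennreal (F x))
    \<and> (\<forall>Y. is_generator n Y (gen_dist (opt_gen n \<phi> F)) \<longrightarrow>
           entropy_cost (opt_gen n \<phi> F) \<le> entropy_cost Y)"
proof -
  have bij: "bij_betw \<phi> (strs n) (strs n)"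
    using assms(1) unfolding binary_number_format_def by auto
  have F_mono: "F (\<phi> c) \<le> F (\<phi> c')"
    if "c \<in> strs n" "c' \<in> strs n" "ord_class.lexordp c c'" for c c'
  proof -
    have "B_less n \<phi> (\<phi> c) (\<phi> c')"
      using bij that unfolding B_less_def bij_betw_def by (simp add: inv_into_f_f)
    then show ?thesis
      using assms(2) bij that unfolding fp_cdf_def by (meson bij_betw_apply)
  qed
  interpret finite_cdf n \<phi> F
    using bij F_mono assms(2) unfolding fp_cdf_def by unfold_locales auto
  show ?thesis
    using opt_gen_is_generator opt_gen_cdf opt_gen_entropy_optimal by blast
qed

end
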